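(* Let $p$ be a prime, $q$ a power of $p$, and $F$ a field of characteristic $p$ containing $\mathbb{F}_q$. Let $L\in F[x]$ be a monic $q$-polynomial of $q$-degree $n\ge1$ whose coefficient of $x$ is nonzero, let $E$ be its splitting field over $F$, and let $G=\mathrm{Gal}(E/F)$, regarded as a subgroup of $GL(n,q)$ via its linear action on the $\mathbb{F}_q$-space $V$ of roots of $L$. Let $\alpha_1,\dots,\alpha_n$ be an $\mathbb{F}_q$-basis of $V$ and $\delta=\det\big(\alpha_i^{q^{j-1}}\big)_{1\le i,j\le n}$. Then $G\le SL(n,q)$ if and only if $\delta\in F$.
   Context: A $q$-polynomial over $F$ is a polynomial $\sum_{i=0}^n a_i x^{q^i}\in F[x]$; with $a_n\ne0$ its $q$-degree is $n$. When the coefficient of $x$ is nonzero the roots of $L$ in $E$ are distinct and form an $n$-dimensional $\mathbb{F}_q$-vector space $V$ on which $G$ acts $\mathbb{F}_q$-linearly. *)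

theory Defs
  imports "HOL-Computational_Algebra.Polynomial" "Jordan_Normal_Form.Determinant"
begin

text \<open>A subfield of the ambient field 'e (the ambient field plays the role of E).\<close>
definition is_subfield :: "'e::field set \<Rightarrow> bool" where
  "is_subfield K \<longleftrightarrow> 0 \<in> K \<and> 1 \<in> K \<and>
     (\<forall>x\<in>K. \<forall>y\<in>K. x + y \<in> K \<and> x * y \<in> K) \<and>
     (\<forall>x\<in>K. - x \<in> K \<and> inverse x \<in> K)"

definition q_poly :: "nat \<Rightarrow> nat \<Rightarrow> (nat \<Rightarrow> 'e::field) \<Rightarrow> 'e poly" where
  "q_poly q n a = (\<Sum>i\<le>n. monom (a i) (q ^ i))"

definition splits :: "'e::field poly \<Rightarrow> bool" where
  "splits P \<longleftrightarrow> (\<exists>rs. P = smult (lead_coeff P) (\<Prod>r\<leftarrow>rs. [:- r, 1:]))"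

definition is_splitting_field :: "'e::field set \<Rightarrow> 'e poly \<Rightarrow> bool" where
  "is_splitting_field F P \<longleftrightarrow> splits P \<and>
     (\<forall>K. is_subfield K \<and> F \<subseteq> K \<and> {x. poly P x = 0} \<subseteq> K \<longrightarrow> K = UNIV)"

definition Gal :: "'e::field set \<Rightarrow> ('e \<Rightarrow> 'e) set" where
  "Gal F = {\<sigma>. bij \<sigma> \<and> (\<forall>x y. \<sigma> (x + y) = \<sigma> x + \<sigma> y) \<and>
     (\<forall>x y. \<sigma> (x * y) = \<sigma> x * \<sigma> y) \<and> \<sigma> 1 = 1 \<and> (\<forall>x\<in>F. \<sigma> x = x)}"

text \<open>The prime-power field F_q inside the ambient field (char p, q a power of p).\<close>
definition Fq :: "nat \<Rightarrow> 'e::field set" where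
  "Fq q = {x. x ^ q = x}"

definition is_Fq_basis :: "nat \<Rightarrow> 'e::field set \<Rightarrow> nat \<Rightarrow> (nat \<Rightarrow> 'e) \<Rightarrow> bool" where
  "is_Fq_basis q V n \<alpha> \<longleftrightarrow> (\<forall>i<n. \<alpha> i \<in> V) \<and>
     (\<forall>c. (\<forall>i<n. c i \<in> Fq q) \<and> (\<Sum>i<n. c i * \<alpha> i) = 0 \<longrightarrow> (\<forall>i<n. c i = 0)) \<and>
     (\<forall>v\<in>V. \<exists>c. (\<forall>i<n. c i \<in> Fq q) \<and> v = (\<Sum>i<n. c i * \<alpha> i))"

definition acts_in_SL :: "nat \<Rightarrow> nat \<Rightarrow> (nat \<Rightarrow> 'e::field) \<Rightarrow> ('e \<Rightarrow> 'e) \<Rightarrow> bool" where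
  "acts_in_SL q n \<alpha> \<sigma> \<longleftrightarrow> (\<exists>C. (\<forall>i<n. \<forall>j<n. C i j \<in> Fq q) \<and>
     (\<forall>i<n. \<sigma> (\<alpha> i) = (\<Sum>j<n. C i j * \<alpha> j)) \<and>
     det (mat n n (\<lambda>(i, j). C i j)) = 1)"

end

theory Submission
  imports Defs "HOL-Computational_Algebra.Primes"
begin

text \<open>
  Let \<open>M = (\<alpha>\<^sub>i ^ q ^ j)\<close> be the Moore matrix of the basis and \<open>\<delta> = det M\<close>.
  A vanishing combination of the columns of \<open>M\<close> would be a q-polynomial of q-degree \<open>< n\<close>
  vanishing on all \<open>q ^ n\<close> roots of \<open>L\<close>, so \<open>\<delta> \<noteq> 0\<close>. Since the powers \<open>x ^ q ^ j\<close> are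
  \<open>F\<^sub>q\<close>-linear, an automorphism \<open>\<sigma>\<close> acting on \<open>V\<close> by the matrix \<open>C\<close> maps \<open>M\<close> to \<open>C M\<close>,
  hence \<open>\<sigma> \<delta> = det C \<cdot> \<delta>\<close>, and \<open>\<sigma>\<close> lies in \<open>SL(n, q)\<close> iff it fixes \<open>\<delta>\<close>.
  It remains to show that \<open>\<delta>\<close> is fixed by \<open>G\<close> only if \<open>\<delta> \<in> F\<close>. Raising \<open>M\<close> to the \<open>q\<close>-th
  power entrywise gives \<open>M T\<close> with \<open>T\<close> a companion matrix of \<open>L\<close> over \<open>F\<close>, so \<open>\<delta>\<close> is a root
  of \<open>X ^ q - det T \<cdot> X\<close>, whose roots \<open>\<zeta> \<delta>\<close> (\<open>\<zeta> \<in> F\<^sub>q\<close>) are distinct. If \<open>\<delta> \<notin> F\<close>, its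
  minimal polynomial thus has a second root \<open>s\<close>, and the embedding \<open>F(\<delta>) \<rightarrow> E\<close> with
  \<open>\<delta> \<mapsto> s\<close> extends to an automorphism of the splitting field \<open>E\<close> of the separable \<open>L\<close>.
\<close>

section \<open>Subfields and polynomials over a subfield\<close>

lemma
  assumes "is_subfield K"
  shows subfield_0: "0 \<in> K" and subfield_1: "1 \<in> K"
    and subfield_add: "x \<in> K \<Longrightarrow> y \<in> K \<Longrightarrow> x + y \<in> K"
    and subfield_mult: "x \<in> K \<Longrightarrow> y \<in> K \<Longrightarrow> x * y \<in> K"
    and subfield_uminus: "x \<in> K \<Longrightarrow> - x \<in> K"
    and subfield_inverse: "x \<in> K \<Longrightarrow> inverse x \<in> K"
  using assms unfolding is_subfield_def by auto

lemma subfield_diff: "is_subfield K \<Longrightarrow> x \<in> K \<Longrightarrow> y \<in> K \<Longrightarrow> x - y \<in> K"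
  by (metis diff_conv_add_uminus subfield_add subfield_uminus)

lemma subfield_sum:
  assumes "is_subfield K" "\<And>i. i \<in> A \<Longrightarrow> f i \<in> K"
  shows "sum f A \<in> K"
  using assms(2)
  by (induction A rule: infinite_finite_induct)
    (simp_all add: subfield_0[OF assms(1)] subfield_add[OF assms(1)])

lemma subfield_prod:
  assumes "is_subfield K" "\<And>i. i \<in> A \<Longrightarrow> f i \<in> K"
  shows "prod f A \<in> K"
  using assms(2)
  by (induction A rule: infinite_finite_induct)
    (simp_all add: subfield_1[OF assms(1)] subfield_mult[OF assms(1)])

lemma subfield_power: "is_subfield K \<Longrightarrow> x \<in> K \<Longrightarrow> x ^ k \<in> K"
  by (induction k) (simp_all add: subfield_1 subfield_mult)

lemma subfield_of_int: "is_subfield K \<Longrightarrow> (of_int z :: 'e::field) \<in> K"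
proof -
  assume K: "is_subfield K"
  have of_nat: "(of_nat k :: 'e) \<in> K" for k
    by (induction k) (simp_all add: subfield_0[OF K] subfield_1[OF K] subfield_add[OF K])
  show ?thesis
  proof (cases "z \<ge> 0")
    case True
    then show ?thesis using of_nat[of "nat z"] by simp
  next
    case False
    then have "(of_int z :: 'e) = - of_nat (nat (- z))" by simp
    then show ?thesis using of_nat[of "nat (- z)"] subfield_uminus[OF K] by simp
  qed
qed

lemma subfield_UNIV: "is_subfield (UNIV :: 'e::field set)"
  unfolding is_subfield_def by auto

lemma det_in_subfield:
  assumes K: "is_subfield K"
    and A: "\<And>i j. i < n \<Longrightarrow> j < n \<Longrightarrow> A $$ (i, j) \<in> K" "A \<in> carrier_mat n n"
  shows "det A \<in> K"
proof -
  have "det A = (\<Sum>\<pi> | \<pi> permutes {0..<n}. signof \<pi> * (\<Prod>i = 0..<n. A $$ (i, \<pi> i)))"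
    using A(2) by (rule det_def')
  also have "\<dots> \<in> K"
  proof (intro subfield_sum[OF K] subfield_mult[OF K] subfield_of_int[OF K] subfield_prod[OF K])
    fix \<pi> i assume "\<pi> \<in> {\<pi>. \<pi> permutes {0..<n}}" "i \<in> {0..<n}"
    then show "A $$ (i, \<pi> i) \<in> K" using A(1) permutes_in_image by fastforce
  qed
  finally show ?thesis .
qed

definition poly_over :: "'e::field set \<Rightarrow> 'e poly \<Rightarrow> bool" where
  "poly_over K g \<longleftrightarrow> (\<forall>i. coeff g i \<in> K)"

context
  fixes K :: "'e::field set"
  assumes K: "is_subfield K"
begin

lemma poly_over_0: "poly_over K 0"
  unfolding poly_over_def using subfield_0[OF K] by simp

lemma poly_over_monom: "k \<in> K \<Longrightarrow> poly_over K (monom k d)"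
  unfolding poly_over_def using subfield_0[OF K] by simp

lemma poly_over_const: "k \<in> K \<Longrightarrow> poly_over K [:k:]"
  using poly_over_monom[of k 0] by (simp add: monom_0)

lemma poly_over_1: "poly_over K 1"
  using poly_over_const[OF subfield_1[OF K]] by (simp add: one_pCons)

lemma poly_over_add: "poly_over K g \<Longrightarrow> poly_over K h \<Longrightarrow> poly_over K (g + h)"
  unfolding poly_over_def using subfield_add[OF K] by simp

lemma poly_over_uminus: "poly_over K g \<Longrightarrow> poly_over K (- g)"
  unfolding poly_over_def using subfield_uminus[OF K] by simp

lemma poly_over_diff: "poly_over K g \<Longrightarrow> poly_over K h \<Longrightarrow> poly_over K (g - h)"
  unfolding poly_over_def using subfield_diff[OF K] by simp

lemma poly_over_smult: "k \<in> K \<Longrightarrow> poly_over K g \<Longrightarrow> poly_over K (smult k g)"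
  unfolding poly_over_def using subfield_mult[OF K] by simp

lemma poly_over_mult: "poly_over K g \<Longrightarrow> poly_over K h \<Longrightarrow> poly_over K (g * h)"
  unfolding poly_over_def coeff_mult by (auto intro!: subfield_sum[OF K] subfield_mult[OF K])

lemma poly_over_div_mod:
  assumes "poly_over K g" "poly_over K m" "lead_coeff m = 1"
  shows "\<exists>h u. poly_over K h \<and> poly_over K u \<and> g = m * h + u \<and> (u = 0 \<or> degree u < degree m)"
  using assms(1)
proof (induction "degree g" arbitrary: g rule: less_induct)
  case less
  show ?case
  proof (cases "g \<noteq> 0 \<and> degree m \<le> degree g")
    case False
    then show ?thesis using less.prems poly_over_0 by (intro exI[of _ 0] exI[of _ g]) auto
  next
    case True
    define t where "t = monom (lead_coeff g) (degree g - degree m)"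
    have t: "poly_over K t"
      unfolding t_def using less.prems by (intro poly_over_monom) (simp add: poly_over_def)
    have "m \<noteq> 0" using assms(3) by auto
    then have deg_mt: "degree (m * t) = degree g"
      using True by (simp add: t_def degree_mult_eq degree_monom_eq)
    then have lead_mt: "coeff (m * t) (degree g) = lead_coeff g"
      by (metis assms(3) lead_coeff_monom lead_coeff_mult mult_1 t_def)
    have rest: "poly_over K (g - m * t)"
      using less.prems t assms(2) by (intro poly_over_diff poly_over_mult)
    show ?thesis
    proof (cases "g - m * t = 0")
      case True
      then show ?thesis using t poly_over_0 by (intro exI[of _ t] exI[of _ 0]) simp
    next
      case False
      have "degree (g - m * t) < degree g"
        using False deg_mt lead_mt
        by (intro degree_less_if_less_eqI) (simp_all add: degree_diff_le)
      then obtain h u where hu: "poly_over K h" "poly_over K u" "g - m * t = m * h + u"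
          "u = 0 \<or> degree u < degree m"
        using less.hyps rest by blast
      from hu(3) have "g = m * (h + t) + u" by (simp add: diff_eq_eq distrib_left add_ac)
      with hu(1,2,4) poly_over_add[OF hu(1) t] show ?thesis by (intro exI conjI)
    qed
  qed
qed

end

section \<open>Homomorphisms defined on a subfield\<close>

definition hom_on :: "'e::field set \<Rightarrow> ('e \<Rightarrow> 'e) \<Rightarrow> bool" where
  "hom_on K \<tau> \<longleftrightarrow>
     (\<forall>x\<in>K. \<forall>y\<in>K. \<tau> (x + y) = \<tau> x + \<tau> y \<and> \<tau> (x * y) = \<tau> x * \<tau> y) \<and> \<tau> 1 = 1"

lemma hom_on_id: "hom_on K id"
  unfolding hom_on_def by simp

context
  fixes K :: "'e::field set" and \<tau> :: "'e \<Rightarrow> 'e"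
  assumes K: "is_subfield K" and \<tau>: "hom_on K \<tau>"
begin

lemma hom_on_add: "x \<in> K \<Longrightarrow> y \<in> K \<Longrightarrow> \<tau> (x + y) = \<tau> x + \<tau> y"
  and hom_on_mult: "x \<in> K \<Longrightarrow> y \<in> K \<Longrightarrow> \<tau> (x * y) = \<tau> x * \<tau> y"
  and hom_on_1: "\<tau> 1 = 1"
  using \<tau> unfolding hom_on_def by blast+

lemma hom_on_0: "\<tau> 0 = 0"
  using hom_on_add[OF subfield_0[OF K] subfield_0[OF K]] by (metis add_cancel_right_right)

lemma hom_on_uminus: "x \<in> K \<Longrightarrow> \<tau> (- x) = - \<tau> x"
  using hom_on_add[of x "- x"] hom_on_0 subfield_uminus[OF K] by (simp add: minus_unique)

lemma hom_on_diff: "x \<in> K \<Longrightarrow> y \<in> K \<Longrightarrow> \<tau> (x - y) = \<tau> x - \<tau> y"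
  using hom_on_add[of x "- y"] hom_on_uminus[of y] subfield_uminus[OF K] by simp

lemma hom_on_mult_inverse: "x \<in> K \<Longrightarrow> x \<noteq> 0 \<Longrightarrow> \<tau> x * \<tau> (inverse x) = 1"
  using hom_on_mult[of x "inverse x"] hom_on_1 subfield_inverse[OF K] by simp

lemma hom_on_inverse: "x \<in> K \<Longrightarrow> \<tau> (inverse x) = inverse (\<tau> x)"
  using inverse_unique[OF hom_on_mult_inverse] hom_on_0 by (cases "x = 0") simp_all

lemma hom_on_eq_0_iff: "x \<in> K \<Longrightarrow> \<tau> x = 0 \<longleftrightarrow> x = 0"
  by (cases "x = 0") (use hom_on_mult_inverse[of x] hom_on_0 in auto)

lemma hom_on_sum: "(\<And>i. i \<in> A \<Longrightarrow> f i \<in> K) \<Longrightarrow> \<tau> (sum f A) = (\<Sum>i\<in>A. \<tau> (f i))"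
  by (induction A rule: infinite_finite_induct)
    (auto simp: hom_on_0 hom_on_add subfield_sum[OF K])

lemma hom_on_power: "x \<in> K \<Longrightarrow> \<tau> (x ^ k) = \<tau> x ^ k"
  by (induction k) (simp_all add: hom_on_1 hom_on_mult subfield_power[OF K])

lemma coeff_map_poly_hom_on: "coeff (map_poly \<tau> g) i = \<tau> (coeff g i)"
  by (simp add: coeff_map_poly hom_on_0)

lemma map_poly_hom_on_add:
  "poly_over K g \<Longrightarrow> poly_over K h \<Longrightarrow> map_poly \<tau> (g + h) = map_poly \<tau> g + map_poly \<tau> h"
  by (rule poly_eqI) (simp add: coeff_map_poly_hom_on hom_on_add poly_over_def)

lemma map_poly_hom_on_diff:
  "poly_over K g \<Longrightarrow> poly_over K h \<Longrightarrow> map_poly \<tau> (g - h) = map_poly \<tau> g - map_poly \<tau> h"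
  by (rule poly_eqI) (simp add: coeff_map_poly_hom_on hom_on_diff poly_over_def)

lemma map_poly_hom_on_smult:
  "k \<in> K \<Longrightarrow> poly_over K g \<Longrightarrow> map_poly \<tau> (smult k g) = smult (\<tau> k) (map_poly \<tau> g)"
  by (rule poly_eqI) (simp add: coeff_map_poly_hom_on hom_on_mult poly_over_def)

lemma map_poly_hom_on_mult:
  assumes "poly_over K g" "poly_over K h"
  shows "map_poly \<tau> (g * h) = map_poly \<tau> g * map_poly \<tau> h"
proof (rule poly_eqI)
  fix i
  have "coeff (map_poly \<tau> (g * h)) i = \<tau> (\<Sum>j\<le>i. coeff g j * coeff h (i - j))"
    by (simp add: coeff_map_poly_hom_on coeff_mult)
  also have "\<dots> = (\<Sum>j\<le>i. \<tau> (coeff g j) * \<tau> (coeff h (i - j)))"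
    using assms by (simp add: hom_on_sum hom_on_mult subfield_mult[OF K] poly_over_def)
  finally show "coeff (map_poly \<tau> (g * h)) i = coeff (map_poly \<tau> g * map_poly \<tau> h) i"
    by (simp add: coeff_map_poly_hom_on coeff_mult)
qed

lemma map_poly_hom_on_const: "map_poly \<tau> [:k:] = [:\<tau> k:]"
  by (rule poly_eqI) (simp add: coeff_map_poly_hom_on coeff_pCons hom_on_0 split: nat.split)

lemma map_poly_hom_on_1: "map_poly \<tau> 1 = 1"
  using map_poly_hom_on_const[of 1] hom_on_1 by (simp add: one_pCons)

lemma degree_map_poly_hom_on:
  assumes "poly_over K g"
  shows "degree (map_poly \<tau> g) = degree g"
proof (cases "g = 0")
  case False
  then have "coeff (map_poly \<tau> g) (degree g) \<noteq> 0"
    using assms by (simp add: coeff_map_poly_hom_on hom_on_eq_0_iff poly_over_def)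
  then show ?thesis using le_degree map_poly_degree_leq antisym by metis
qed simp

lemma poly_map_poly_hom_on:
  assumes g: "poly_over K g" and x: "x \<in> K"
  shows "\<tau> (poly g x) = poly (map_poly \<tau> g) (\<tau> x)"
proof -
  have terms: "coeff g i * x ^ i \<in> K" for i
    using g x by (simp add: subfield_mult[OF K] subfield_power[OF K] poly_over_def)
  have "\<tau> (poly g x) = (\<Sum>i\<le>degree g. \<tau> (coeff g i * x ^ i))"
    unfolding poly_altdef using terms by (rule hom_on_sum)
  also have "\<dots> = (\<Sum>i\<le>degree g. coeff (map_poly \<tau> g) i * \<tau> x ^ i)"
    using g x by (intro sum.cong refl)
      (simp add: hom_on_mult hom_on_power coeff_map_poly_hom_on subfield_power[OF K] poly_over_def)
  also have "\<dots> = poly (map_poly \<tau> g) (\<tau> x)"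
    unfolding poly_altdef[of "map_poly \<tau> g"] degree_map_poly_hom_on[OF g] ..
  finally show ?thesis .
qed

end

lemma map_poly_fixing_coeffs:
  assumes "poly_over F P" "\<forall>x\<in>F. \<tau> x = x"
  shows "map_poly \<tau> P = P"
proof (rule map_poly_idI)
  fix x assume "x \<in> set (coeffs P)"
  then have "x \<in> range (coeff P)" by (simp add: range_coeff)
  then show "\<tau> x = x" using assms unfolding poly_over_def by auto
qed

section \<open>Minimal polynomials and the extension of embeddings\<close>

text \<open>\<open>is_minpoly K \<tau> s m\<close>: \<open>map_poly \<tau> m\<close> is the minimal polynomial of \<open>s\<close> over \<open>\<tau> ` K\<close>;
  for \<open>\<tau> = id\<close> this is the usual minimal polynomial over \<open>K\<close>.\<close>

definition is_minpoly :: "'e::field set \<Rightarrow> ('e \<Rightarrow> 'e) \<Rightarrow> 'e \<Rightarrow> 'e poly \<Rightarrow> bool" where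
  "is_minpoly K \<tau> s m \<longleftrightarrow> poly_over K m \<and> lead_coeff m = 1 \<and> poly (map_poly \<tau> m) s = 0 \<and>
     (\<forall>g. poly_over K g \<and> g \<noteq> 0 \<and> poly (map_poly \<tau> g) s = 0 \<longrightarrow> degree m \<le> degree g)"

context
  fixes K :: "'e::field set" and \<tau> :: "'e \<Rightarrow> 'e"
  assumes K: "is_subfield K" and \<tau>: "hom_on K \<tau>"
begin

lemma minpoly_exists:
  assumes g: "poly_over K g" "g \<noteq> 0" "poly (map_poly \<tau> g) s = 0"
  shows "\<exists>m. is_minpoly K \<tau> s m"
proof -
  let ?vanishes = "\<lambda>d. \<exists>g. poly_over K g \<and> g \<noteq> 0 \<and> poly (map_poly \<tau> g) s = 0 \<and> degree g = d"
  obtain g0 where g0: "poly_over K g0" "g0 \<noteq> 0" "poly (map_poly \<tau> g0) s = 0"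
      "degree g0 = (LEAST d. ?vanishes d)"
    using LeastI[of ?vanishes "degree g"] g by blast
  define c where "c = inverse (lead_coeff g0)"
  have c: "c \<in> K"
    unfolding c_def using g0(1) by (intro subfield_inverse[OF K]) (simp add: poly_over_def)
  have "is_minpoly K \<tau> s (smult c g0)"
    unfolding is_minpoly_def
  proof (intro conjI allI impI)
    show "poly_over K (smult c g0)" using poly_over_smult[OF K c g0(1)] .
    show "lead_coeff (smult c g0) = 1" using g0(2) by (simp add: c_def)
    show "poly (map_poly \<tau> (smult c g0)) s = 0"
      using g0(3) by (simp add: map_poly_hom_on_smult[OF K \<tau> c g0(1)])
    fix g assume "poly_over K g \<and> g \<noteq> 0 \<and> poly (map_poly \<tau> g) s = 0"
    then have "degree g0 \<le> degree g" unfolding g0(4) by (intro Least_le) blast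
    then show "degree (smult c g0) \<le> degree g" using degree_smult_le order.trans by blast
  qed
  then show ?thesis ..
qed

lemma minpoly_dvd:
  assumes m: "is_minpoly K \<tau> s m" and g: "poly_over K g" "poly (map_poly \<tau> g) s = 0"
  shows "\<exists>h. poly_over K h \<and> g = m * h"
proof -
  have m': "poly_over K m" "lead_coeff m = 1" "poly (map_poly \<tau> m) s = 0"
    using m unfolding is_minpoly_def by auto
  obtain h u where hu: "poly_over K h" "poly_over K u" "g = m * h + u" "u = 0 \<or> degree u < degree m"
    using poly_over_div_mod[OF K g(1) m'(1,2)] by blast
  have "poly (map_poly \<tau> u) s = 0"
    using g(2) m'(3) unfolding hu(3)
    by (simp add: map_poly_hom_on_add[OF K \<tau> poly_over_mult[OF K m'(1) hu(1)] hu(2)]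
        map_poly_hom_on_mult[OF K \<tau> m'(1) hu(1)])
  then have "u = 0" using hu(2,4) m unfolding is_minpoly_def by (meson leD)
  then show ?thesis using hu(1,3) by auto
qed

lemma minpoly_degree_pos:
  assumes "is_minpoly K \<tau> s m"
  shows "degree m > 0"
proof (rule ccontr)
  assume "\<not> degree m > 0"
  then have "m = 1"
    using assms degree_0_id[of m] unfolding is_minpoly_def by (simp add: one_pCons)
  then show False using assms map_poly_hom_on_1[OF K \<tau>] unfolding is_minpoly_def by simp
qed

end

text \<open>This makes \<open>g(r) \<mapsto> (map_poly \<tau> g)(s)\<close> well defined. For the converse direction,
  the pulled-back minimal polynomial of \<open>s\<close> is a factor of the irreducible \<open>m\<close>.\<close>

lemma minpoly_root_transfer:
  assumes K: "is_subfield K" and \<tau>: "hom_on K \<tau>"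
    and m: "is_minpoly K id r m" and s: "poly (map_poly \<tau> m) s = 0" and g: "poly_over K g"
  shows "poly (map_poly \<tau> g) s = 0 \<longleftrightarrow> poly g r = 0"
proof
  have m': "poly_over K m" "m \<noteq> 0" "poly m r = 0"
    using m unfolding is_minpoly_def by auto
  {
    assume "poly g r = 0"
    then obtain h where "poly_over K h" "g = m * h"
      using minpoly_dvd[OF K hom_on_id m g] by auto
    then show "poly (map_poly \<tau> g) s = 0"
      using s by (simp add: map_poly_hom_on_mult[OF K \<tau> m'(1)])
  }
  assume gs: "poly (map_poly \<tau> g) s = 0"
  obtain w where w: "is_minpoly K \<tau> s w"
    using minpoly_exists[OF K \<tau> m'(1,2) s] by blast
  obtain h where h: "poly_over K h" "m = w * h"
    using minpoly_dvd[OF K \<tau> w m'(1) s] by blast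
  have "poly w r = 0 \<or> poly h r = 0" using m'(3) h(2) by simp
  then show "poly g r = 0"
  proof
    assume "poly w r = 0"
    moreover obtain k where "g = w * k" using minpoly_dvd[OF K \<tau> w g gs] by blast
    ultimately show ?thesis by simp
  next
    assume "poly h r = 0"
    moreover have "h \<noteq> 0" using h(2) m'(2) by auto
    ultimately have "degree m \<le> degree h" using m h(1) unfolding is_minpoly_def by simp
    moreover have "degree m = degree w + degree h"
      using h(2) m'(2) by (simp add: degree_mult_eq)
    ultimately show ?thesis using minpoly_degree_pos[OF K \<tau> w] by simp
  qed
qed

locale root_adjunction =
  fixes K :: "'e::field set" and \<tau> :: "'e \<Rightarrow> 'e" and r s :: 'e and m :: "'e poly"
  assumes subfield: "is_subfield K" and hom: "hom_on K \<tau>"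
    and minpoly: "is_minpoly K id r m" and root: "poly (map_poly \<tau> m) s = 0"
begin

abbreviation ev :: "'e poly \<Rightarrow> 'e" where
  "ev g \<equiv> poly (map_poly \<tau> g) s"

definition frac_rep :: "'e \<Rightarrow> 'e poly \<Rightarrow> 'e poly \<Rightarrow> bool" where
  "frac_rep x g h \<longleftrightarrow> poly_over K g \<and> poly_over K h \<and> poly h r \<noteq> 0 \<and> x = poly g r / poly h r"

definition adjoined :: "'e set" where
  "adjoined = {x. \<exists>g h. frac_rep x g h}"

definition extension :: "'e \<Rightarrow> 'e" where
  "extension x = (SOME y. \<exists>g h. frac_rep x g h \<and> y = ev g / ev h)"

lemma ev_eq_0_iff: "poly_over K g \<Longrightarrow> ev g = 0 \<longleftrightarrow> poly g r = 0"
  by (rule minpoly_root_transfer[OF subfield hom minpoly root])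

lemma ev_add: "poly_over K g \<Longrightarrow> poly_over K h \<Longrightarrow> ev (g + h) = ev g + ev h"
  by (simp add: map_poly_hom_on_add[OF subfield hom])

lemma ev_diff: "poly_over K g \<Longrightarrow> poly_over K h \<Longrightarrow> ev (g - h) = ev g - ev h"
  by (simp add: map_poly_hom_on_diff[OF subfield hom])

lemma ev_mult: "poly_over K g \<Longrightarrow> poly_over K h \<Longrightarrow> ev (g * h) = ev g * ev h"
  by (simp add: map_poly_hom_on_mult[OF subfield hom])

lemma frac_rep_ev_eq:
  assumes "frac_rep x g1 h1" "frac_rep x g2 h2"
  shows "ev g1 / ev h1 = ev g2 / ev h2"
proof -
  have g1: "poly_over K g1" "poly_over K h1" "poly h1 r \<noteq> 0" "x = poly g1 r / poly h1 r"
    and g2: "poly_over K g2" "poly_over K h2" "poly h2 r \<noteq> 0" "x = poly g2 r / poly h2 r"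
    using assms unfolding frac_rep_def by auto
  have over: "poly_over K (g1 * h2)" "poly_over K (g2 * h1)"
    using g1 g2 by (simp_all add: poly_over_mult[OF subfield])
  have "poly g1 r * poly h2 r = poly g2 r * poly h1 r"
    using g1(3,4) g2(3,4) by (simp add: frac_eq_eq)
  then have "poly (g1 * h2 - g2 * h1) r = 0" by simp
  then have "ev g1 * ev h2 = ev g2 * ev h1"
    using ev_eq_0_iff[OF poly_over_diff[OF subfield over]]
    by (simp add: ev_diff[OF over] ev_mult g1(1,2) g2(1,2))
  moreover have "ev h1 \<noteq> 0" "ev h2 \<noteq> 0" using ev_eq_0_iff g1 g2 by auto
  ultimately show ?thesis by (simp add: frac_eq_eq)
qed

lemma extension_eq: "frac_rep x g h \<Longrightarrow> extension x = ev g / ev h"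
  unfolding extension_def by (rule someI2[where a = "ev g / ev h"]) (use frac_rep_ev_eq in blast)+

lemma frac_rep_add:
  "frac_rep x g1 h1 \<Longrightarrow> frac_rep y g2 h2 \<Longrightarrow> frac_rep (x + y) (g1 * h2 + g2 * h1) (h1 * h2)"
  unfolding frac_rep_def
  by (simp add: poly_over_mult[OF subfield] poly_over_add[OF subfield] add_frac_eq)

lemma frac_rep_mult: "frac_rep x g1 h1 \<Longrightarrow> frac_rep y g2 h2 \<Longrightarrow> frac_rep (x * y) (g1 * g2) (h1 * h2)"
  unfolding frac_rep_def by (auto simp: poly_over_mult[OF subfield])

lemma frac_rep_uminus: "frac_rep x g h \<Longrightarrow> frac_rep (- x) (- g) h"
  unfolding frac_rep_def by (auto simp: poly_over_uminus[OF subfield])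

lemma frac_rep_inverse: "frac_rep x g h \<Longrightarrow> x \<noteq> 0 \<Longrightarrow> frac_rep (inverse x) h g"
  unfolding frac_rep_def by auto

lemma frac_rep_const: "k \<in> K \<Longrightarrow> frac_rep k [:k:] 1"
  unfolding frac_rep_def by (auto simp: poly_over_const[OF subfield] poly_over_1[OF subfield])

lemma frac_rep_root: "frac_rep r (monom 1 1) 1"
  unfolding frac_rep_def
  by (simp add: poly_over_monom[OF subfield] poly_over_1[OF subfield] subfield_1[OF subfield]
      poly_monom)

lemma mem_adjoined: "x \<in> adjoined \<longleftrightarrow> (\<exists>g h. frac_rep x g h)"
  unfolding adjoined_def by simp

lemma subfield_adjoined: "is_subfield adjoined"
  unfolding is_subfield_def
proof (intro conjI ballI)
  show zero: "0 \<in> adjoined" and "1 \<in> adjoined"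
    using frac_rep_const[OF subfield_0[OF subfield]] frac_rep_const[OF subfield_1[OF subfield]]
    by (auto simp: mem_adjoined)
  fix x assume "x \<in> adjoined"
  then obtain g h where x: "frac_rep x g h" by (auto simp: mem_adjoined)
  show "- x \<in> adjoined" using frac_rep_uminus[OF x] by (auto simp: mem_adjoined)
  show "inverse x \<in> adjoined"
  proof (cases "x = 0")
    case False
    then show ?thesis using frac_rep_inverse[OF x] by (auto simp: mem_adjoined)
  qed (simp add: zero)
  fix y assume "y \<in> adjoined"
  then obtain g' h' where y: "frac_rep y g' h'" by (auto simp: mem_adjoined)
  show "x + y \<in> adjoined" using frac_rep_add[OF x y] by (auto simp: mem_adjoined)
  show "x * y \<in> adjoined" using frac_rep_mult[OF x y] by (auto simp: mem_adjoined)
qed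

lemma hom_on_adjoined: "hom_on adjoined extension"
  unfolding hom_on_def
proof (intro conjI ballI)
  show "extension 1 = 1"
    using extension_eq[OF frac_rep_const[OF subfield_1[OF subfield]]]
    by (simp add: map_poly_hom_on_const[OF subfield hom] map_poly_hom_on_1[OF subfield hom]
        hom_on_1[OF subfield hom])
  fix x y assume "x \<in> adjoined" "y \<in> adjoined"
  then obtain g1 h1 g2 h2 where x: "frac_rep x g1 h1" and y: "frac_rep y g2 h2"
    by (auto simp: mem_adjoined)
  have over: "poly_over K g1" "poly_over K h1" "poly_over K g2" "poly_over K h2"
    and nz: "ev h1 \<noteq> 0" "ev h2 \<noteq> 0"
    using x y ev_eq_0_iff unfolding frac_rep_def by auto
  show "extension (x + y) = extension x + extension y"
    unfolding extension_eq[OF frac_rep_add[OF x y]] extension_eq[OF x] extension_eq[OF y]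
    using over by (simp add: ev_add ev_mult poly_over_mult[OF subfield] add_frac_eq[OF nz])
  show "extension (x * y) = extension x * extension y"
    unfolding extension_eq[OF frac_rep_mult[OF x y]] extension_eq[OF x] extension_eq[OF y]
    using over by (simp add: ev_mult)
qed

lemma subset_adjoined: "K \<subseteq> adjoined"
  using frac_rep_const mem_adjoined by blast

lemma extension_on_subfield: "x \<in> K \<Longrightarrow> extension x = \<tau> x"
  using extension_eq[OF frac_rep_const, of x]
  by (simp add: map_poly_hom_on_const[OF subfield hom] map_poly_hom_on_1[OF subfield hom])

lemma root_in_adjoined: "r \<in> adjoined"
  using frac_rep_root by (auto simp: mem_adjoined)

lemma extension_root: "extension r = s"
  using extension_eq[OF frac_rep_root]
  by (simp add: map_poly_monom hom_on_0[OF subfield hom] hom_on_1[OF subfield hom]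
      map_poly_hom_on_1[OF subfield hom] poly_monom)

end

lemma hom_on_extends_to_root:
  assumes "is_subfield K" "hom_on K \<tau>" "is_minpoly K id r m" "poly (map_poly \<tau> m) s = 0"
  shows "\<exists>K' \<tau>'. is_subfield K' \<and> K \<subseteq> K' \<and> r \<in> K' \<and> hom_on K' \<tau>' \<and>
           (\<forall>x\<in>K. \<tau>' x = \<tau> x) \<and> \<tau>' r = s"
proof -
  interpret root_adjunction K \<tau> r s m using assms by unfold_locales
  show ?thesis
    using subfield_adjoined subset_adjoined root_in_adjoined hom_on_adjoined
      extension_on_subfield extension_root by blast
qed

section \<open>Galois automorphisms of a splitting field\<close>

definition splits_separably :: "'e::field poly \<Rightarrow> bool" where
  "splits_separably P \<longleftrightarrow> P \<noteq> 0 \<and> card {x. poly P x = 0} = degree P"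

lemma splits_separably_factor:
  assumes "splits_separably (f * g)"
  shows "splits_separably f"
proof -
  have f: "f \<noteq> 0" and g: "g \<noteq> 0" and card: "card {x. poly (f * g) x = 0} = degree (f * g)"
    using assms unfolding splits_separably_def by auto
  have "{x. poly (f * g) x = 0} = {x. poly f x = 0} \<union> {x. poly g x = 0}" by auto
  then have "degree f + degree g \<le> card {x. poly f x = 0} + card {x. poly g x = 0}"
    using card card_Un_le[of "{x. poly f x = 0}" "{x. poly g x = 0}"] f g
    by (simp add: degree_mult_eq)
  then show ?thesis
    using card_poly_roots_bound[OF f] card_poly_roots_bound[OF g] f
    unfolding splits_separably_def by linarith
qed

lemma splits_separably_ex_root:
  assumes "splits_separably f" "degree f > 0"
  shows "\<exists>s. poly f s = 0"
proof (rule ccontr)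
  assume "\<nexists>s. poly f s = 0"
  then have "{s. poly f s = 0} = {}" by blast
  then show False using assms unfolding splits_separably_def by simp
qed

lemma splits_separably_ex_root_neq:
  assumes "splits_separably f" "degree f \<ge> 2"
  shows "\<exists>s. poly f s = 0 \<and> s \<noteq> x"
proof (rule ccontr)
  assume "\<not> ?thesis"
  then have "{s. poly f s = 0} \<subseteq> {x}" by auto
  then have "card {s. poly f s = 0} \<le> 1" using card_mono[of "{x}"] by fastforce
  then show False using assms unfolding splits_separably_def by simp
qed

lemma pderiv_eq_0_at_double_root:
  fixes x :: "'e::field"
  assumes "[:- x, 1:] ^ 2 dvd P"
  shows "poly (pderiv P) x = 0"
proof -
  define h where "h = [:- x, 1:]"
  obtain g where "P = h ^ 2 * g" using assms unfolding h_def by (rule dvdE)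
  then have "P = h * (h * g)" by (simp only: power2_eq_square mult.assoc)
  then have "poly (pderiv P) x =
      poly h x * poly (pderiv (h * g)) x + poly h x * poly g x * poly (pderiv h) x"
    by (simp only: pderiv_mult poly_add poly_mult)
  then show ?thesis by (simp add: h_def)
qed

lemma prod_list_linear_Cons:
  "(\<Prod>r\<leftarrow>r # rs. [:- r, 1:]) = [:- r, 1:] * (\<Prod>r\<leftarrow>rs. [:- r, 1:] :: 'e::field poly)"
  by (simp only: list.map prod_list.Cons)

lemma prod_list_linear_nonzero: "(\<Prod>r\<leftarrow>rs. [:- r, 1:] :: 'e::field poly) \<noteq> 0"
proof (induction rs)
  case (Cons r rs)
  have "[:- r, 1:] \<noteq> (0 :: 'e poly)" by simp
  with Cons.IH show ?case unfolding prod_list_linear_Cons by (metis no_zero_divisors)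
qed simp

lemma degree_prod_list_linear: "degree (\<Prod>r\<leftarrow>rs. [:- r, 1:] :: 'e::field poly) = length rs"
proof (induction rs)
  case (Cons r rs)
  then show ?case
    unfolding prod_list_linear_Cons using prod_list_linear_nonzero[of rs]
    by (subst degree_mult_eq) simp_all
qed simp

lemma poly_prod_list_linear_eq_0_iff:
  "poly (\<Prod>r\<leftarrow>rs. [:- r, 1:] :: 'e::field poly) x = 0 \<longleftrightarrow> x \<in> set rs"
proof (induction rs)
  case (Cons r rs)
  then show ?case unfolding prod_list_linear_Cons by (simp only: poly_mult) simp
qed simp

lemma splits_separably_if_simple_roots:
  assumes "splits P" "P \<noteq> 0" and simple: "\<And>x. poly P x = 0 \<Longrightarrow> poly (pderiv P) x \<noteq> 0"
  shows "splits_separably P"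
proof -
  obtain rs where P: "P = smult (lead_coeff P) (\<Prod>r\<leftarrow>rs. [:- r, 1:])"
    using assms(1) unfolding splits_def by blast
  have roots: "{x. poly P x = 0} = set rs"
    using assms(2) by (subst P) (simp add: poly_prod_list_linear_eq_0_iff)
  have "distinct rs"
  proof (rule ccontr)
    assume "\<not> distinct rs"
    then obtain xs y ys zs where rs: "rs = xs @ [y] @ ys @ [y] @ zs"
      using not_distinct_decomp by blast
    have "(\<Prod>r\<leftarrow>rs. [:- r, 1:]) =
        [:- y, 1:] ^ 2 * ((\<Prod>r\<leftarrow>xs. [:- r, 1:]) * (\<Prod>r\<leftarrow>ys. [:- r, 1:]) * (\<Prod>r\<leftarrow>zs. [:- r, 1:]))"
      unfolding rs by (simp only: map_append prod_list.append list.map prod_list.Cons prod_list.Nil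
          power2_eq_square mult_1_left mult_ac)
    then have "[:- y, 1:] ^ 2 dvd P" by (subst P) (simp only: dvd_smult dvd_triv_left)
    moreover have "y \<in> {x. poly P x = 0}" unfolding roots rs by simp
    ultimately show False using simple pderiv_eq_0_at_double_root by auto
  qed
  moreover have "degree P = length rs"
    using assms(2) by (subst P) (simp add: degree_prod_list_linear)
  ultimately show ?thesis using assms(2) roots distinct_card unfolding splits_separably_def by metis
qed

lemma Gal_hom_on: "\<sigma> \<in> Gal F \<Longrightarrow> hom_on UNIV \<sigma>"
  unfolding Gal_def hom_on_def by auto

lemma Gal_comm_ring_hom:
  assumes "\<sigma> \<in> Gal F"
  shows "comm_ring_hom \<sigma>"
proof -
  have "\<sigma> 0 = 0" using hom_on_0[OF subfield_UNIV Gal_hom_on[OF assms]] .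
  then show ?thesis by unfold_locales (use assms in \<open>auto simp: Gal_def\<close>)
qed

lemma Gal_maps_roots:
  assumes "\<sigma> \<in> Gal F" "poly_over F P" "poly P x = 0"
  shows "poly P (\<sigma> x) = 0"
proof -
  have "\<forall>x\<in>F. \<sigma> x = x" using assms(1) unfolding Gal_def by blast
  then have "map_poly \<sigma> P = P" using map_poly_fixing_coeffs[OF assms(2)] by blast
  moreover have "poly_over UNIV P" unfolding poly_over_def by simp
  ultimately show ?thesis
    using poly_map_poly_hom_on[OF subfield_UNIV Gal_hom_on[OF assms(1)], of P x] assms(3)
      hom_on_0[OF subfield_UNIV Gal_hom_on[OF assms(1)]] by simp
qed

lemma subfield_range_hom_on:
  assumes \<tau>: "hom_on UNIV \<tau>"
  shows "is_subfield (range \<tau>)"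
  unfolding is_subfield_def
proof (intro conjI ballI)
  show "0 \<in> range \<tau>" using hom_on_0[OF subfield_UNIV \<tau>] by (metis rangeI)
  show "1 \<in> range \<tau>" using hom_on_1[OF subfield_UNIV \<tau>] by (metis rangeI)
  fix x assume "x \<in> range \<tau>"
  then obtain a where a: "x = \<tau> a" by blast
  show "- x \<in> range \<tau>" using hom_on_uminus[OF subfield_UNIV \<tau>, of a] a by (metis UNIV_I rangeI)
  show "inverse x \<in> range \<tau>"
    using hom_on_inverse[OF subfield_UNIV \<tau>, of a] a by (metis UNIV_I rangeI)
  fix y assume "y \<in> range \<tau>"
  then obtain b where b: "y = \<tau> b" by blast
  show "x + y \<in> range \<tau>" using hom_on_add[OF subfield_UNIV \<tau>, of a b] a b by (metis rangeI UNIV_I)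
  show "x * y \<in> range \<tau>" using hom_on_mult[OF subfield_UNIV \<tau>, of a b] a b by (metis rangeI UNIV_I)
qed

text \<open>An embedding of the splitting field into itself permutes the finitely many roots,
  so its image contains \<open>F\<close> and all roots and is the whole field.\<close>

lemma hom_on_UNIV_in_Gal:
  assumes P: "poly_over F P" "P \<noteq> 0" "is_splitting_field F P"
    and \<tau>: "hom_on UNIV \<tau>" "\<forall>x\<in>F. \<tau> x = x"
  shows "\<tau> \<in> Gal F"
proof -
  let ?V = "{x. poly P x = 0}"
  have inj: "inj \<tau>"
  proof (rule injI)
    fix x y assume "\<tau> x = \<tau> y"
    then have "\<tau> (x - y) = 0" using hom_on_diff[OF subfield_UNIV \<tau>(1)] by simp
    then show "x = y" using hom_on_eq_0_iff[OF subfield_UNIV \<tau>(1)] by simp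
  qed
  have "\<tau> ` ?V \<subseteq> ?V"
  proof
    fix y assume "y \<in> \<tau> ` ?V"
    then obtain x where x: "poly P x = 0" "y = \<tau> x" by blast
    have "\<tau> (poly P x) = poly P (\<tau> x)"
      using poly_map_poly_hom_on[OF subfield_UNIV \<tau>(1), of P x] map_poly_fixing_coeffs[OF P(1) \<tau>(2)]
      by (simp add: poly_over_def)
    then show "y \<in> ?V" using x hom_on_0[OF subfield_UNIV \<tau>(1)] by simp
  qed
  then have "\<tau> ` ?V = ?V"
    using endo_inj_surj[OF poly_roots_finite[OF P(2)]] inj_on_subset[OF inj] by blast
  moreover have "F \<subseteq> range \<tau>" using \<tau>(2) by (metis rangeI subsetI)
  ultimately have "range \<tau> = UNIV"
    using P(3) subfield_range_hom_on[OF \<tau>(1)] unfolding is_splitting_field_def by blast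
  then show ?thesis
    using inj \<tau> hom_on_1[OF subfield_UNIV \<tau>(1)] unfolding Gal_def hom_on_def bij_def by auto
qed

text \<open>Isomorphism extension: extend \<open>\<tau>\<close> root by root, mapping each root to a root of the
  image of its minimal polynomial; that image divides \<open>P\<close>, so it splits separably too.\<close>

lemma hom_on_extends_to_Gal:
  assumes P: "poly_over F P" "splits_separably P" "is_splitting_field F P"
    and K: "is_subfield K" "F \<subseteq> K" and \<tau>: "hom_on K \<tau>" "\<forall>x\<in>F. \<tau> x = x"
  shows "\<exists>\<sigma>\<in>Gal F. \<forall>x\<in>K. \<sigma> x = \<tau> x"
  using K \<tau>
proof (induction "card ({x. poly P x = 0} - K)" arbitrary: K \<tau> rule: less_induct)
  case less
  let ?V = "{x. poly P x = 0}"
  have P0: "P \<noteq> 0" using P(2) unfolding splits_separably_def by blast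
  show ?case
  proof (cases "?V \<subseteq> K")
    case True
    then have "K = UNIV" using P(3) less.prems unfolding is_splitting_field_def by blast
    then show ?thesis using hom_on_UNIV_in_Gal[OF P(1) P0 P(3)] less.prems by blast
  next
    case False
    then obtain r where r: "poly P r = 0" "r \<notin> K" by blast
    have K: "is_subfield K" and \<tau>: "hom_on K \<tau>" using less.prems by auto
    have PK: "poly_over K P" using P(1) less.prems(2) unfolding poly_over_def by blast
    obtain m where m: "is_minpoly K id r m"
      using minpoly_exists[OF K hom_on_id PK P0] r by auto
    obtain h where h: "poly_over K h" "P = m * h"
      using minpoly_dvd[OF K hom_on_id m PK] r by auto
    have "P = map_poly \<tau> m * map_poly \<tau> h"
      using map_poly_fixing_coeffs[OF P(1) less.prems(4)] map_poly_hom_on_mult[OF K \<tau> _ h(1), of m]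
        m h(2) unfolding is_minpoly_def by metis
    then have "splits_separably (map_poly \<tau> m)" using P(2) splits_separably_factor by metis
    moreover have "degree (map_poly \<tau> m) > 0"
      using m minpoly_degree_pos[OF K hom_on_id m] degree_map_poly_hom_on[OF K \<tau>]
      unfolding is_minpoly_def by simp
    ultimately obtain s where s: "poly (map_poly \<tau> m) s = 0"
      using splits_separably_ex_root by blast
    obtain K' \<tau>' where ext: "is_subfield K'" "K \<subseteq> K'" "r \<in> K'" "hom_on K' \<tau>'"
        "\<forall>x\<in>K. \<tau>' x = \<tau> x" "\<tau>' r = s"
      using hom_on_extends_to_root[OF K \<tau> m s] by blast
    have "card (?V - K') < card (?V - K)"
      using ext(2,3) r poly_roots_finite[OF P0] by (intro psubset_card_mono) auto
    moreover have "F \<subseteq> K'" "\<forall>x\<in>F. \<tau>' x = x" using ext(2,5) less.prems(2,4) by auto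
    ultimately obtain \<sigma> where "\<sigma> \<in> Gal F" "\<forall>x\<in>K'. \<sigma> x = \<tau>' x"
      using less.hyps ext(1,4) by blast
    then show ?thesis using ext(2,5) by (metis subsetD)
  qed
qed

lemma Gal_maps_to_conjugate:
  assumes F: "is_subfield F" and P: "poly_over F P" "splits_separably P" "is_splitting_field F P"
    and m: "is_minpoly F id x m" and s: "poly m s = 0"
  shows "\<exists>\<sigma>\<in>Gal F. \<sigma> x = s"
proof -
  have "poly (map_poly id m) s = 0" using s by simp
  from hom_on_extends_to_root[OF F hom_on_id m this]
  obtain K \<tau> where ext: "is_subfield K" "F \<subseteq> K" "x \<in> K" "hom_on K \<tau>"
      "\<forall>y\<in>F. \<tau> y = id y" "\<tau> x = s"
    by blast
  then obtain \<sigma> where "\<sigma> \<in> Gal F" "\<forall>y\<in>K. \<sigma> y = \<tau> y"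
    using hom_on_extends_to_Gal[OF P ext(1,2,4)] by auto
  then show ?thesis using ext(3,6) by auto
qed

lemma Gal_fixed_imp_in_subfield:
  assumes F: "is_subfield F" and P: "poly_over F P" "splits_separably P" "is_splitting_field F P"
    and g: "poly_over F g" "splits_separably g" "poly g x = 0"
    and fixed: "\<forall>\<sigma>\<in>Gal F. \<sigma> x = x"
  shows "x \<in> F"
proof -
  have "g \<noteq> 0" using g(2) unfolding splits_separably_def by blast
  then obtain m where m: "is_minpoly F id x m"
    using minpoly_exists[OF F hom_on_id g(1)] g(3) by auto
  obtain h where "g = m * h" using minpoly_dvd[OF F hom_on_id m g(1)] g(3) by auto
  then have sep: "splits_separably m" using g(2) splits_separably_factor by blast
  have "degree m = 1"
  proof (rule ccontr)
    assume "degree m \<noteq> 1"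
    then have "degree m \<ge> 2" using minpoly_degree_pos[OF F hom_on_id m] by simp
    then obtain s where "poly m s = 0" "s \<noteq> x" using splits_separably_ex_root_neq[OF sep] by blast
    then show False using Gal_maps_to_conjugate[OF F P m] fixed by metis
  qed
  have "0 = poly m x" using m unfolding is_minpoly_def by simp
  also have "\<dots> = coeff m 0 + coeff m 1 * x" unfolding poly_altdef \<open>degree m = 1\<close> by simp
  also have "coeff m 1 = 1" using m \<open>degree m = 1\<close> unfolding is_minpoly_def by simp
  finally have "x = - coeff m 0" by (simp add: eq_neg_iff_add_eq_0 add.commute)
  then show ?thesis using m subfield_uminus[OF F] unfolding is_minpoly_def poly_over_def by simp
qed

section \<open>q-polynomials and the Moore determinant\<close>

lemma Fq_power_q_power: "x \<in> Fq q \<Longrightarrow> x ^ (q ^ j) = x"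
proof (induction j)
  case (Suc j)
  then show ?case unfolding Fq_def by (simp add: power_mult)
qed simp

lemma Fq_linear_power:
  fixes d x :: "'i \<Rightarrow> 'e::field"
  assumes "prime CHAR('e)" "q = CHAR('e) ^ k" "\<And>i. i \<in> I \<Longrightarrow> d i \<in> Fq q"
  shows "(\<Sum>i\<in>I. d i * x i) ^ (q ^ j) = (\<Sum>i\<in>I. d i * x i ^ (q ^ j))"
proof -
  have "(\<Sum>i\<in>I. d i * x i) ^ (q ^ j) = (\<Sum>i\<in>I. (d i * x i) ^ (q ^ j))"
    using freshmans_dream_sum'[OF assms(1), where m = "q ^ j" and n = "k * j"] assms(2)
    by (simp add: power_mult)
  also have "\<dots> = (\<Sum>i\<in>I. d i * x i ^ (q ^ j))"
    using assms(3) by (simp add: power_mult_distrib Fq_power_q_power)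
  finally show ?thesis .
qed

lemma comm_ring_hom_power_char:
  assumes "prime CHAR('e)" "q = CHAR('e) ^ k"
  shows "comm_ring_hom (\<lambda>x::'e::field. x ^ q)"
proof -
  have "q > 0" using assms by (simp add: prime_gt_0_nat)
  then show ?thesis
    by unfold_locales (simp_all add: freshmans_dream'[OF assms] power_mult_distrib)
qed

lemma finite_Fq:
  assumes "q > 1"
  shows "finite (Fq q :: 'e::field set)"
proof -
  have "coeff (monom 1 q - monom 1 1 :: 'e poly) q = 1" using assms by simp
  then have "monom 1 q - monom 1 1 \<noteq> (0 :: 'e poly)" by (metis coeff_0 zero_neq_one)
  moreover have "Fq q \<subseteq> {x. poly (monom 1 q - monom 1 1) x = 0}"
    unfolding Fq_def by (auto simp: poly_monom)
  ultimately show ?thesis using finite_subset poly_roots_finite by blast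
qed

text \<open>\<open>Fq q\<close> is only known to be the set of roots of \<open>X ^ q - X\<close>; that it has \<open>q\<close>
  elements follows from the \<open>q ^ n\<close> elements of an \<open>n\<close>-dimensional space over it.\<close>

lemma card_Fq_ge:
  fixes \<alpha> :: "nat \<Rightarrow> 'e::field"
  assumes "q > 1" "n \<ge> 1" and basis: "is_Fq_basis q V n \<alpha>" and card: "card V = q ^ n"
  shows "q \<le> card (Fq q :: 'e set)"
proof -
  let ?coords = "PiE {..<n} (\<lambda>_. Fq q :: 'e set)"
  have "V \<subseteq> (\<lambda>c. \<Sum>i<n. c i * \<alpha> i) ` ?coords"
  proof
    fix v assume "v \<in> V"
    then obtain c where "\<forall>i<n. c i \<in> Fq q" "v = (\<Sum>i<n. c i * \<alpha> i)"
      using basis unfolding is_Fq_basis_def by blast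
    then show "v \<in> (\<lambda>c. \<Sum>i<n. c i * \<alpha> i) ` ?coords"
      by (intro image_eqI[of _ _ "restrict c {..<n}"]) auto
  qed
  moreover have fin: "finite ?coords" using finite_Fq[OF assms(1)] by (intro finite_PiE) auto
  ultimately have "card V \<le> card ((\<lambda>c. \<Sum>i<n. c i * \<alpha> i) ` ?coords)"
    by (intro card_mono finite_imageI)
  also have "\<dots> \<le> card ?coords" using fin by (rule card_image_le)
  also have "\<dots> = card (Fq q :: 'e set) ^ n" by (simp add: card_PiE)
  finally have "q ^ Suc (n - 1) \<le> card (Fq q :: 'e set) ^ Suc (n - 1)" using card assms(2) by simp
  then show ?thesis by (rule power_le_imp_le_base) simp
qed

lemma poly_q_poly: "poly (q_poly q m a) x = (\<Sum>i\<le>m. a i * x ^ (q ^ i))"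
  unfolding q_poly_def by (simp add: poly_sum poly_monom)

lemma coeff_q_poly_q_power:
  assumes "q > 1"
  shows "coeff (q_poly q m a) (q ^ j) = (if j \<le> m then a j else 0)"
proof -
  have "coeff (q_poly q m a) (q ^ j) = (\<Sum>i\<le>m. if i = j then a i else 0)"
    unfolding q_poly_def coeff_sum coeff_monom using assms by (intro sum.cong refl) auto
  then show ?thesis by simp
qed

lemma degree_q_poly_le: "q > 0 \<Longrightarrow> degree (q_poly q m a) \<le> q ^ m"
  unfolding q_poly_def
  by (intro degree_sum_le order.trans[OF degree_monom_le] power_increasing) auto

lemma degree_q_poly:
  assumes "q > 1" "a m \<noteq> 0"
  shows "degree (q_poly q m a) = q ^ m"
  using degree_q_poly_le[of q m a] le_degree[of "q_poly q m a" "q ^ m"] assms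
  by (simp add: coeff_q_poly_q_power)

lemma poly_over_q_poly: "is_subfield K \<Longrightarrow> \<forall>i\<le>m. a i \<in> K \<Longrightarrow> poly_over K (q_poly q m a)"
  unfolding poly_over_def q_poly_def coeff_sum coeff_monom by (auto intro!: subfield_sum subfield_0)

lemma pderiv_q_poly:
  fixes a :: "nat \<Rightarrow> 'e::field"
  assumes "CHAR('e) dvd q"
  shows "pderiv (q_poly q m a) = [:a 0:]"
proof -
  have "(of_nat (q ^ i) :: 'e) = 0" if "i > 0" for i
    using assms that by (simp add: of_nat_eq_0_iff_char_dvd)
  then have "pderiv (q_poly q m a) = (\<Sum>i\<in>{0}. monom (of_nat (q ^ i) * a i) (q ^ i - 1))"
    unfolding q_poly_def higher_pderiv_sum[where n = 1, simplified] pderiv_monom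
    by (intro sum.mono_neutral_right) auto
  then show ?thesis by (simp add: monom_0)
qed

lemma q_poly_splits_separably:
  fixes a :: "nat \<Rightarrow> 'e::field"
  assumes "CHAR('e) dvd q" "q > 1" "a m \<noteq> 0" "a 0 \<noteq> 0" "splits (q_poly q m a)"
  shows "splits_separably (q_poly q m a)"
proof (rule splits_separably_if_simple_roots[OF assms(5)])
  show "q_poly q m a \<noteq> 0" using coeff_q_poly_q_power[OF assms(2), of m a m] assms(3) by auto
  show "poly (pderiv (q_poly q m a)) x \<noteq> 0" for x using assms(1,4) by (simp add: pderiv_q_poly)
qed

lemma poly_q_poly_Fq_linear:
  fixes d x :: "'i \<Rightarrow> 'e::field"
  assumes "prime CHAR('e)" "q = CHAR('e) ^ k" "\<And>i. i \<in> I \<Longrightarrow> d i \<in> Fq q"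
  shows "poly (q_poly q m a) (\<Sum>i\<in>I. d i * x i) = (\<Sum>i\<in>I. d i * poly (q_poly q m a) (x i))"
proof -
  have "poly (q_poly q m a) (\<Sum>i\<in>I. d i * x i) = (\<Sum>j\<le>m. \<Sum>i\<in>I. d i * (a j * x i ^ (q ^ j)))"
    unfolding poly_q_poly
    by (simp add: Fq_linear_power[OF assms] sum_distrib_left mult.left_commute)
  also have "\<dots> = (\<Sum>i\<in>I. d i * poly (q_poly q m a) (x i))"
    unfolding poly_q_poly by (subst sum.swap) (simp add: sum_distrib_left)
  finally show ?thesis .
qed

definition Moore_mat :: "nat \<Rightarrow> nat \<Rightarrow> (nat \<Rightarrow> 'a::comm_ring_1) \<Rightarrow> 'a mat" where
  "Moore_mat q n \<alpha> = mat n n (\<lambda>(i, j). \<alpha> i ^ (q ^ j))"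

lemma Moore_mat_carrier [simp]: "Moore_mat q n \<alpha> \<in> carrier_mat n n"
  by (simp add: Moore_mat_def)

lemma det_Moore_mat_nonzero:
  fixes \<alpha> :: "nat \<Rightarrow> 'e::field"
  assumes char: "prime CHAR('e)" "q = CHAR('e) ^ k" and "q > 1" "n \<ge> 1"
    and basis: "is_Fq_basis q V n \<alpha>" and card: "card V = q ^ n"
  shows "det (Moore_mat q n \<alpha>) \<noteq> 0"
proof
  assume "det (Moore_mat q n \<alpha>) = 0"
  then obtain v where v: "v \<in> carrier_vec n" "v \<noteq> 0\<^sub>v n" "Moore_mat q n \<alpha> *\<^sub>v v = 0\<^sub>v n"
    using det_0_iff_vec_prod_zero_field[OF Moore_mat_carrier] by blast
  have "\<exists>j<n. v $ j \<noteq> 0"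
  proof (rule ccontr)
    assume "\<not> ?thesis"
    then have "v = 0\<^sub>v n" using v(1) by (intro eq_vecI) auto
    then show False using v(2) by simp
  qed
  then obtain j0 where j0: "j0 < n" "v $ j0 \<noteq> 0" by blast
  define Q where "Q = q_poly q (n - 1) (\<lambda>j. v $ j)"
  have "coeff Q (q ^ j0) \<noteq> 0"
    unfolding Q_def coeff_q_poly_q_power[OF \<open>q > 1\<close>] using j0 by simp
  then have Q0: "Q \<noteq> 0" by auto
  have indices: "{..n - 1} = {..<n}" using \<open>n \<ge> 1\<close> by auto
  have roots: "poly Q (\<alpha> i) = 0" if "i < n" for i
  proof -
    have "poly Q (\<alpha> i) = (\<Sum>j<n. v $ j * \<alpha> i ^ (q ^ j))"
      unfolding Q_def poly_q_poly indices ..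
    also have "\<dots> = (Moore_mat q n \<alpha> *\<^sub>v v) $ i"
      using that v(1) by (simp add: Moore_mat_def scalar_prod_def atLeast0LessThan mult.commute)
    finally show ?thesis using v(3) that by simp
  qed
  have "V \<subseteq> {x. poly Q x = 0}"
  proof
    fix x assume "x \<in> V"
    then obtain c where c: "\<forall>i<n. c i \<in> Fq q" "x = (\<Sum>i<n. c i * \<alpha> i)"
      using basis unfolding is_Fq_basis_def by blast
    have "poly Q x = (\<Sum>i<n. c i * poly Q (\<alpha> i))"
      unfolding c(2) Q_def using c(1) by (intro poly_q_poly_Fq_linear[OF char]) auto
    then show "x \<in> {x. poly Q x = 0}" using roots by simp
  qed
  then have "card V \<le> card {x. poly Q x = 0}" by (rule card_mono[OF poly_roots_finite[OF Q0]])
  then have "q ^ n \<le> degree Q" using card card_poly_roots_bound[OF Q0] by simp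
  moreover have "degree Q \<le> q ^ (n - 1)"
    unfolding Q_def using \<open>q > 1\<close> by (intro degree_q_poly_le) simp
  moreover have "q ^ (n - 1) < q ^ n" using \<open>q > 1\<close> \<open>n \<ge> 1\<close> by (intro power_strict_increasing) auto
  ultimately show False by linarith
qed

lemma hom_det_Moore_mat:
  fixes \<alpha> :: "nat \<Rightarrow> 'e::field"
  assumes char: "prime CHAR('e)" "q = CHAR('e) ^ k" and \<sigma>: "comm_ring_hom \<sigma>"
    and C: "\<forall>i<n. \<forall>j<n. C i j \<in> Fq q" and act: "\<forall>i<n. \<sigma> (\<alpha> i) = (\<Sum>j<n. C i j * \<alpha> j)"
  shows "\<sigma> (det (Moore_mat q n \<alpha>)) = det (mat n n (\<lambda>(i, j). C i j)) * det (Moore_mat q n \<alpha>)"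
proof -
  interpret \<sigma>: comm_ring_hom \<sigma> by (rule \<sigma>)
  let ?C = "mat n n (\<lambda>(i, j). C i j)"
  have "map_mat \<sigma> (Moore_mat q n \<alpha>) = ?C * Moore_mat q n \<alpha>"
  proof (rule eq_matI)
    fix i j assume "i < dim_row (?C * Moore_mat q n \<alpha>)" "j < dim_col (?C * Moore_mat q n \<alpha>)"
    then have i: "i < n" and j: "j < n" by (auto simp: Moore_mat_def)
    have "map_mat \<sigma> (Moore_mat q n \<alpha>) $$ (i, j) = \<sigma> (\<alpha> i) ^ (q ^ j)"
      using i j by (simp add: Moore_mat_def \<sigma>.hom_power)
    also have "\<dots> = (\<Sum>l<n. C i l * \<alpha> l ^ (q ^ j))"
      unfolding act[rule_format, OF i] by (rule Fq_linear_power[OF char]) (use C i in auto)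
    also have "\<dots> = (?C * Moore_mat q n \<alpha>) $$ (i, j)"
      using i j by (simp add: Moore_mat_def scalar_prod_def atLeast0LessThan)
    finally show "map_mat \<sigma> (Moore_mat q n \<alpha>) $$ (i, j) = (?C * Moore_mat q n \<alpha>) $$ (i, j)" .
  qed (auto simp: Moore_mat_def)
  then have "\<sigma> (det (Moore_mat q n \<alpha>)) = det (?C * Moore_mat q n \<alpha>)"
    using \<sigma>.hom_det[of "Moore_mat q n \<alpha>"] by simp
  also have "\<dots> = det ?C * det (Moore_mat q n \<alpha>)" by (rule det_mult) auto
  finally show ?thesis .
qed

text \<open>Right multiplication by this matrix shifts the columns \<open>x ^ q ^ j\<close> of a Moore matrix of
  roots \<open>x\<close> of \<open>q_poly q n a\<close> to \<open>x ^ q ^ (j + 1)\<close>, the last one via \<open>q_poly q n a = 0\<close>.\<close>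

definition q_companion_mat :: "nat \<Rightarrow> (nat \<Rightarrow> 'a::comm_ring_1) \<Rightarrow> 'a mat" where
  "q_companion_mat n a = mat n n (\<lambda>(k, j). if Suc j < n then of_bool (k = Suc j) else - a k)"

lemma det_q_companion_mat_in_subfield:
  assumes "is_subfield K" "\<forall>i<n. a i \<in> K"
  shows "det (q_companion_mat n a) \<in> K"
  by (rule det_in_subfield[OF assms(1), where n = n])
    (use assms in \<open>auto simp: q_companion_mat_def subfield_0 subfield_1 subfield_uminus\<close>)

lemma Moore_mat_Frobenius:
  fixes \<alpha> :: "nat \<Rightarrow> 'e::field"
  assumes "a n = 1" and roots: "\<forall>i<n. poly (q_poly q n a) (\<alpha> i) = 0"
  shows "map_mat (\<lambda>x. x ^ q) (Moore_mat q n \<alpha>) = Moore_mat q n \<alpha> * q_companion_mat n a"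
proof (rule eq_matI)
  fix i j assume "i < dim_row (Moore_mat q n \<alpha> * q_companion_mat n a)"
    "j < dim_col (Moore_mat q n \<alpha> * q_companion_mat n a)"
  then have i: "i < n" and j: "j < n" by (auto simp: Moore_mat_def q_companion_mat_def)
  have "(Moore_mat q n \<alpha> * q_companion_mat n a) $$ (i, j) =
      (\<Sum>k<n. \<alpha> i ^ (q ^ k) * (if Suc j < n then of_bool (k = Suc j) else - a k))"
    using i j by (simp add: Moore_mat_def q_companion_mat_def scalar_prod_def atLeast0LessThan)
  also have "\<dots> = \<alpha> i ^ (q ^ Suc j)"
  proof (cases "Suc j < n")
    case False
    then have "Suc j = n" using j by simp
    have "(\<Sum>k<Suc n. a k * \<alpha> i ^ (q ^ k)) = 0"
      using roots i unfolding poly_q_poly lessThan_Suc_atMost by simp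
    then have "(\<Sum>k<n. a k * \<alpha> i ^ (q ^ k)) + \<alpha> i ^ (q ^ n) = 0" using \<open>a n = 1\<close> by simp
    then have "- (\<Sum>k<n. a k * \<alpha> i ^ (q ^ k)) = \<alpha> i ^ (q ^ n)" by (rule minus_unique)
    then show ?thesis using False \<open>Suc j = n\<close> by (simp add: sum_negf mult.commute)
  qed simp
  finally show "map_mat (\<lambda>x. x ^ q) (Moore_mat q n \<alpha>) $$ (i, j) =
      (Moore_mat q n \<alpha> * q_companion_mat n a) $$ (i, j)"
    using i j by (simp add: Moore_mat_def power_mult[symmetric] mult.commute)
qed (auto simp: Moore_mat_def q_companion_mat_def)

lemma det_Moore_mat_power:
  fixes \<alpha> :: "nat \<Rightarrow> 'e::field"
  assumes "prime CHAR('e)" "q = CHAR('e) ^ k" "a n = 1" "\<forall>i<n. poly (q_poly q n a) (\<alpha> i) = 0"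
  shows "det (Moore_mat q n \<alpha>) ^ q = det (Moore_mat q n \<alpha>) * det (q_companion_mat n a)"
proof -
  have "det (Moore_mat q n \<alpha>) ^ q = det (map_mat (\<lambda>x. x ^ q) (Moore_mat q n \<alpha>))"
    using comm_ring_hom.hom_det[OF comm_ring_hom_power_char[OF assms(1,2)]] by simp
  also have "\<dots> = det (Moore_mat q n \<alpha>) * det (q_companion_mat n a)"
    unfolding Moore_mat_Frobenius[OF assms(3,4)] by (rule det_mult) (auto simp: q_companion_mat_def)
  finally show ?thesis .
qed

lemma splits_separably_monom_diff:
  fixes y c :: "'e::field"
  assumes "q > 1" "q \<le> card (Fq q :: 'e set)" "y \<noteq> 0" "y ^ q = c * y"
  shows "splits_separably (monom 1 q - monom c 1)"
proof -
  let ?g = "monom 1 q - monom c 1 :: 'e poly"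
  have coeff: "coeff ?g q = 1" using assms(1) by simp
  then have g0: "?g \<noteq> 0" by (metis coeff_0 zero_neq_one)
  have "degree ?g \<le> q"
    using assms(1) by (intro degree_diff_le order.trans[OF degree_monom_le]) simp_all
  then have deg: "degree ?g = q" using le_degree[of ?g q] coeff by simp
  have "(\<lambda>\<zeta>. \<zeta> * y) ` Fq q \<subseteq> {x. poly ?g x = 0}"
    using assms(4) by (auto simp: Fq_def poly_monom power_mult_distrib)
  moreover have "inj_on (\<lambda>\<zeta>. \<zeta> * y) (Fq q)" using assms(3) by (intro inj_onI) simp
  ultimately have "card (Fq q :: 'e set) \<le> card {x. poly ?g x = 0}"
    using card_mono[OF poly_roots_finite[OF g0]] card_image by metis
  then show ?thesis
    using assms(2) card_poly_roots_bound[OF g0] g0 deg unfolding splits_separably_def by simp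
qed

lemma det_Moore_mat_in_subfield_iff_Gal_fixed:
  fixes \<alpha> :: "nat \<Rightarrow> 'e::field"
  assumes char: "prime CHAR('e)" "q = CHAR('e) ^ k" "q > 1" "n \<ge> 1"
    and F: "is_subfield F" "\<forall>i\<le>n. a i \<in> F" "a n = 1"
    and L: "splits_separably (q_poly q n a)" "is_splitting_field F (q_poly q n a)"
    and basis: "is_Fq_basis q {x. poly (q_poly q n a) x = 0} n \<alpha>"
    and card: "card {x. poly (q_poly q n a) x = 0} = q ^ n"
    and \<delta>: "det (Moore_mat q n \<alpha>) \<noteq> 0"
  shows "det (Moore_mat q n \<alpha>) \<in> F \<longleftrightarrow>
    (\<forall>\<sigma>\<in>Gal F. \<sigma> (det (Moore_mat q n \<alpha>)) = det (Moore_mat q n \<alpha>))"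
proof
  let ?\<delta> = "det (Moore_mat q n \<alpha>)"
  define c where "c = det (q_companion_mat n a)"
  have "?\<delta> ^ q = c * ?\<delta>"
    using det_Moore_mat_power[OF char(1,2), where n = n and a = a] F(3) basis
    unfolding c_def is_Fq_basis_def by (simp add: mult.commute)
  then have twist:
      "splits_separably (monom 1 q - monom c 1)" "poly (monom 1 q - monom c 1) ?\<delta> = 0"
    using splits_separably_monom_diff[OF char(3) card_Fq_ge[OF char(3,4) basis card] \<delta>]
    by (simp_all add: poly_monom)
  have "c \<in> F" unfolding c_def using F(1,2) by (intro det_q_companion_mat_in_subfield) auto
  then have "poly_over F (monom 1 q - monom c 1)"
    using F(1) by (simp add: poly_over_diff poly_over_monom subfield_1)
  moreover have "poly_over F (q_poly q n a)" using poly_over_q_poly F(1,2) by blast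
  moreover assume "\<forall>\<sigma>\<in>Gal F. \<sigma> ?\<delta> = ?\<delta>"
  ultimately show "?\<delta> \<in> F" using Gal_fixed_imp_in_subfield[OF F(1) _ L _ twist] by blast
qed (auto simp: Gal_def)

lemma acts_in_SL_iff_fixes_det_Moore_mat:
  fixes \<alpha> :: "nat \<Rightarrow> 'e::field"
  assumes char: "prime CHAR('e)" "q = CHAR('e) ^ k" and \<sigma>: "comm_ring_hom \<sigma>"
    and basis: "is_Fq_basis q V n \<alpha>" and maps: "\<forall>x\<in>V. \<sigma> x \<in> V"
    and \<delta>: "det (Moore_mat q n \<alpha>) \<noteq> 0"
  shows "acts_in_SL q n \<alpha> \<sigma> \<longleftrightarrow> \<sigma> (det (Moore_mat q n \<alpha>)) = det (Moore_mat q n \<alpha>)"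
proof
  assume "acts_in_SL q n \<alpha> \<sigma>"
  then obtain C where "\<forall>i<n. \<forall>j<n. C i j \<in> Fq q" "\<forall>i<n. \<sigma> (\<alpha> i) = (\<Sum>j<n. C i j * \<alpha> j)"
      "det (mat n n (\<lambda>(i, j). C i j)) = 1"
    unfolding acts_in_SL_def by blast
  then show "\<sigma> (det (Moore_mat q n \<alpha>)) = det (Moore_mat q n \<alpha>)"
    using hom_det_Moore_mat[OF char \<sigma>] by simp
next
  assume fixed: "\<sigma> (det (Moore_mat q n \<alpha>)) = det (Moore_mat q n \<alpha>)"
  have "\<forall>i. \<exists>c. i < n \<longrightarrow> (\<forall>j<n. c j \<in> Fq q) \<and> \<sigma> (\<alpha> i) = (\<Sum>j<n. c j * \<alpha> j)"
    using basis maps unfolding is_Fq_basis_def by blast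
  then obtain C where C: "\<forall>i<n. \<forall>j<n. C i j \<in> Fq q" "\<forall>i<n. \<sigma> (\<alpha> i) = (\<Sum>j<n. C i j * \<alpha> j)"
    by metis
  then have "det (mat n n (\<lambda>(i, j). C i j)) * det (Moore_mat q n \<alpha>) = 1 * det (Moore_mat q n \<alpha>)"
    using hom_det_Moore_mat[OF char \<sigma> C] fixed by simp
  then show "acts_in_SL q n \<alpha> \<sigma>" unfolding acts_in_SL_def using C \<delta> by auto
qed

theorem corollary2p3:
  fixes p q n :: nat and F :: "'e::field set" and a :: "nat \<Rightarrow> 'e" and \<alpha> :: "nat \<Rightarrow> 'e"
  assumes "prime p"
    and "\<exists>k\<ge>1. q = p ^ k"
    and "CHAR('e) = p"
    and "is_subfield F"
    and "Fq q \<subseteq> F"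
    and "n \<ge> 1"
    and "\<forall>i\<le>n. a i \<in> F"
    and "a n = 1"
    and "a 0 \<noteq> 0"
    and "is_splitting_field F (q_poly q n a)"
    and "is_Fq_basis q {x. poly (q_poly q n a) x = 0} n \<alpha>"
  shows "(\<forall>\<sigma>\<in>Gal F. acts_in_SL q n \<alpha> \<sigma>) \<longleftrightarrow>
         det (mat n n (\<lambda>(i, j). \<alpha> i ^ (q ^ j))) \<in> F"
proof -
  let ?L = "q_poly q n a" and ?\<delta> = "det (Moore_mat q n \<alpha>)"
  obtain k where k: "k \<ge> 1" "q = CHAR('e) ^ k" using assms(2,3) by blast
  have char: "prime CHAR('e)" using assms(1,3) by simp
  then have q: "q > 1" using one_less_power[of "CHAR('e)" k] k prime_gt_1_nat by simp
  have sep: "splits_separably ?L"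
    using q_poly_splits_separably[where q = q and m = n and a = a] k q assms(8-10)
    unfolding is_splitting_field_def by simp
  then have card: "card {x. poly ?L x = 0} = q ^ n"
    using degree_q_poly[OF q, where a = a and m = n] assms(8) unfolding splits_separably_def by simp
  have \<delta>: "?\<delta> \<noteq> 0" using det_Moore_mat_nonzero[OF char k(2) q assms(6,11) card] .
  have "acts_in_SL q n \<alpha> \<sigma> \<longleftrightarrow> \<sigma> ?\<delta> = ?\<delta>" if "\<sigma> \<in> Gal F" for \<sigma>
    using acts_in_SL_iff_fixes_det_Moore_mat[OF char k(2) Gal_comm_ring_hom[OF that] assms(11) _ \<delta>]
      Gal_maps_roots[OF that poly_over_q_poly[OF assms(4,7)]] by blast
  moreover have "?\<delta> \<in> F \<longleftrightarrow> (\<forall>\<sigma>\<in>Gal F. \<sigma> ?\<delta> = ?\<delta>)"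
    using det_Moore_mat_in_subfield_iff_Gal_fixed[OF char k(2) q assms(6,4,7,8) sep assms(10,11)
        card \<delta>] .
  ultimately show ?thesis unfolding Moore_mat_def by blast
qed

end
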